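(* Let $(V,L,\varphi,E)$ be a valuation system. Let $C$ be a sublattice of $V$ and $\psi:C\to E$ a valuation such that $\psi$ extends $\varphi$ and the valuation system $(V,C,\psi,E)$ is $\Pi$-complete. Then $\varphi$ is $\Pi$-extendible and $\psi$ extends $\Pi\varphi$.
   Context: A valuation system $(V,L,\varphi,E)$ consists of: (i) a lattice $V$ which is $\sigma$-distributive, i.e. for every $a\in V$ and every sequence $(b_n)$ in $V$ whose infimum exists, $\bigwedge_n(a\vee b_n)$ exists and equals $a\vee\bigwedge_n b_n$, and dually for suprema; (ii) a sublattice $L$ of $V$; (iii) a partially ordered abelian group $E$ which is R-complete: whenever $x_1\ge x_2\ge\cdots$ and $y_1\ge y_2\ge\cdots$ in $E$ are such that $\bigwedge_n(x_n+y_n)$ exists, then $\bigwedge_n x_n$ and $\bigwedge_n y_n$ exist, and dually for increasing sequences and suprema; (iv) a valuation $\varphi:L\to E$, i.e. an order-preserving map with $\varphi(a\wedge b)+\varphi(a\vee b)=\varphi(a)+\varphi(b)$. A map $\psi:C\to E$ extends $\varphi:L\to E$ if $L\subseteq C$ and $\psi|_L=\varphi$. A decreasing sequence $a_1\ge a_2\ge\cdots$ in $L$ is $\varphi$-convergent if $\bigwedge_n a_n$ exists in $V$ and $\bigwedge_n\varphi(a_n)$ exists in $E$. The system is $\Pi$-complete if for every $\varphi$-convergent decreasing sequence $(a_n)$ in $L$ we have $\bigwedge_n a_n\in L$ and $\varphi(\bigwedge_n a_n)=\bigwedge_n\varphi(a_n)$. Let $\Pi L:=\{\bigwedge_n a_n: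 (a_n)\text{ a }\varphi\text{-convergent decreasing sequence in }L\}$ (a sublattice of $V$). $\varphi$ is $\Pi$-extendible if there is a valuation $\Pi\varphi:\Pi L\to E$ with $\Pi\varphi(\bigwedge_n a_n)=\bigwedge_n\varphi(a_n)$ for every $\varphi$-convergent decreasing sequence $(a_n)$ in $L$. *)

theory Defs
  imports Complex_Main
begin

definition is_glb :: "'a::order set \<Rightarrow> 'a \<Rightarrow> bool" where
  "is_glb S x \<longleftrightarrow> (\<forall>s\<in>S. x \<le> s) \<and> (\<forall>y. (\<forall>s\<in>S. y \<le> s) \<longrightarrow> y \<le> x)"

definition is_lub :: "'a::order set \<Rightarrow> 'a \<Rightarrow> bool" where
  "is_lub S x \<longleftrightarrow> (\<forall>s\<in>S. s \<le> x) \<and> (\<forall>y. (\<forall>s\<in>S. s \<le> y) \<longrightarrow> x \<le> y)"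

definition has_glb :: "'a::order set \<Rightarrow> bool" where
  "has_glb S \<longleftrightarrow> (\<exists>x. is_glb S x)"

definition has_lub :: "'a::order set \<Rightarrow> bool" where
  "has_lub S \<longleftrightarrow> (\<exists>x. is_lub S x)"

definition sigma_distributive :: "'v::lattice itself \<Rightarrow> bool" where
  "sigma_distributive (t::'v itself) \<longleftrightarrow>
     (\<forall>(a::'v) (b::nat \<Rightarrow> 'v) i. is_glb (range b) i \<longrightarrow> is_glb (range (\<lambda>n. sup a (b n))) (sup a i)) \<and>
     (\<forall>(a::'v) (b::nat \<Rightarrow> 'v) s. is_lub (range b) s \<longrightarrow> is_lub (range (\<lambda>n. inf a (b n))) (inf a s))"

definition R_complete :: "'e::ordered_ab_group_add itself \<Rightarrow> bool" where
  "R_complete (t::'e itself) \<longleftrightarrow>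
     (\<forall>(x::nat \<Rightarrow> 'e) y. decseq x \<longrightarrow> decseq y \<longrightarrow> has_glb (range (\<lambda>n. x n + y n))
        \<longrightarrow> has_glb (range x) \<and> has_glb (range y)) \<and>
     (\<forall>(x::nat \<Rightarrow> 'e) y. incseq x \<longrightarrow> incseq y \<longrightarrow> has_lub (range (\<lambda>n. x n + y n))
        \<longrightarrow> has_lub (range x) \<and> has_lub (range y))"

definition sublattice :: "'v::lattice set \<Rightarrow> bool" where
  "sublattice L \<longleftrightarrow> (\<forall>a\<in>L. \<forall>b\<in>L. inf a b \<in> L \<and> sup a b \<in> L)"

text \<open>A valuation on L (values outside L are irrelevant).\<close>
definition valuation :: "'v::lattice set \<Rightarrow> ('v \<Rightarrow> 'e::ordered_ab_group_add) \<Rightarrow> bool" where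
  "valuation L \<phi> \<longleftrightarrow>
     (\<forall>a\<in>L. \<forall>b\<in>L. a \<le> b \<longrightarrow> \<phi> a \<le> \<phi> b) \<and>
     (\<forall>a\<in>L. \<forall>b\<in>L. \<phi> (inf a b) + \<phi> (sup a b) = \<phi> a + \<phi> b)"

definition valuation_system :: "'v::lattice set \<Rightarrow> ('v \<Rightarrow> 'e::ordered_ab_group_add) \<Rightarrow> bool" where
  "valuation_system L \<phi> \<longleftrightarrow>
     sigma_distributive TYPE('v) \<and> sublattice L \<and> R_complete TYPE('e) \<and> valuation L \<phi>"

definition extends :: "('v \<Rightarrow> 'e) \<Rightarrow> 'v set \<Rightarrow> ('v \<Rightarrow> 'e) \<Rightarrow> 'v set \<Rightarrow> bool" where
  "extends \<psi> C \<phi> L \<longleftrightarrow> L \<subseteq> C \<and> (\<forall>x\<in>L. \<psi> x = \<phi> x)"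

definition phi_convergent :: "'v::lattice set \<Rightarrow> ('v \<Rightarrow> 'e::ordered_ab_group_add) \<Rightarrow> (nat \<Rightarrow> 'v) \<Rightarrow> bool" where
  "phi_convergent L \<phi> a \<longleftrightarrow>
     (\<forall>n. a n \<in> L) \<and> decseq a \<and> has_glb (range a) \<and> has_glb (range (\<lambda>n. \<phi> (a n)))"

definition Pi_complete :: "'v::lattice set \<Rightarrow> ('v \<Rightarrow> 'e::ordered_ab_group_add) \<Rightarrow> bool" where
  "Pi_complete L \<phi> \<longleftrightarrow>
     (\<forall>a i. phi_convergent L \<phi> a \<longrightarrow> is_glb (range a) i \<longrightarrow>
        i \<in> L \<and> is_glb (range (\<lambda>n. \<phi> (a n))) (\<phi> i))"

definition PiL :: "'v::lattice set \<Rightarrow> ('v \<Rightarrow> 'e::ordered_ab_group_add) \<Rightarrow> 'v set" where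
  "PiL L \<phi> = {i. \<exists>a. phi_convergent L \<phi> a \<and> is_glb (range a) i}"

definition Pi_extension :: "'v::lattice set \<Rightarrow> ('v \<Rightarrow> 'e::ordered_ab_group_add) \<Rightarrow> ('v \<Rightarrow> 'e) \<Rightarrow> bool" where
  "Pi_extension L \<phi> \<chi> \<longleftrightarrow> valuation (PiL L \<phi>) \<chi> \<and>
     (\<forall>a i. phi_convergent L \<phi> a \<longrightarrow> is_glb (range a) i \<longrightarrow>
        is_glb (range (\<lambda>n. \<phi> (a n))) (\<chi> i))"

definition Pi_extendible :: "'v::lattice set \<Rightarrow> ('v \<Rightarrow> 'e::ordered_ab_group_add) \<Rightarrow> bool" where
  "Pi_extendible L \<phi> \<longleftrightarrow> (\<exists>\<chi>. Pi_extension L \<phi> \<chi>)"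

end

theory Submission
  imports Defs
begin

text \<open>On \<Pi>L the restriction of \<psi> already is a \<Pi>-extension of \<phi>: a \<phi>-convergent sequence
  in L is \<psi>-convergent in C with the same values, so \<Pi>-completeness of (C, \<psi>) puts its
  infimum into C with \<psi>-value the infimum of the \<phi>-values. Any \<Pi>-extension is determined
  by these infima, hence agrees with \<psi> on \<Pi>L.\<close>

lemma is_glb_unique: "is_glb S x \<Longrightarrow> is_glb S y \<Longrightarrow> x = (y::'a::order)"
  unfolding is_glb_def by (meson order_antisym)

lemma extends_phi_convergent:
  assumes "extends \<psi> C \<phi> L" and "phi_convergent L \<phi> a"
  shows "phi_convergent C \<psi> a" and "(\<lambda>n. \<psi> (a n)) = (\<lambda>n. \<phi> (a n))"
proof -
  have "\<forall>n. a n \<in> L" using assms(2) unfolding phi_convergent_def by blast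
  then show values_eq: "(\<lambda>n. \<psi> (a n)) = (\<lambda>n. \<phi> (a n))" and "phi_convergent C \<psi> a"
    using assms unfolding extends_def phi_convergent_def by auto
qed

lemma Pi_complete_extends_glb:
  assumes "Pi_complete C \<psi>" and "extends \<psi> C \<phi> L"
    and "phi_convergent L \<phi> a" and "is_glb (range a) i"
  shows "i \<in> C" and "is_glb (range (\<lambda>n. \<phi> (a n))) (\<psi> i)"
  using assms extends_phi_convergent[OF assms(2,3)] unfolding Pi_complete_def by metis+

lemma PiL_subset_Pi_complete:
  assumes "Pi_complete C \<psi>" and "extends \<psi> C \<phi> L"
  shows "PiL L \<phi> \<subseteq> C"
  using Pi_complete_extends_glb(1)[OF assms] unfolding PiL_def by blast

lemma valuation_subset: "valuation C \<psi> \<Longrightarrow> D \<subseteq> C \<Longrightarrow> valuation D \<psi>"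
  unfolding valuation_def by blast

lemma Pi_extension_of_Pi_complete:
  assumes "valuation C \<psi>" and "Pi_complete C \<psi>" and "extends \<psi> C \<phi> L"
  shows "Pi_extension L \<phi> \<psi>"
  unfolding Pi_extension_def
  using valuation_subset[OF assms(1) PiL_subset_Pi_complete[OF assms(2,3)]]
    Pi_complete_extends_glb(2)[OF assms(2,3)] by blast

lemma Pi_extension_unique:
  assumes "Pi_extension L \<phi> \<chi>" and "Pi_extension L \<phi> \<chi>'" and "x \<in> PiL L \<phi>"
  shows "\<chi> x = \<chi>' x"
proof -
  obtain a where "phi_convergent L \<phi> a" and "is_glb (range a) x"
    using assms(3) unfolding PiL_def by blast
  then have "is_glb (range (\<lambda>n. \<phi> (a n))) (\<chi> x)" and "is_glb (range (\<lambda>n. \<phi> (a n))) (\<chi>' x)"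
    using assms(1,2) unfolding Pi_extension_def by blast+
  then show ?thesis by (rule is_glb_unique)
qed

theorem lemma5p5:
  fixes L C :: "'v::lattice set" and \<phi> \<psi> :: "'v \<Rightarrow> 'e::ordered_ab_group_add"
  assumes "valuation_system L \<phi>"
    and "sublattice C" and "valuation C \<psi>"
    and "extends \<psi> C \<phi> L"
    and "Pi_complete C \<psi>"
  shows "Pi_extendible L \<phi> \<and>
         (\<forall>\<chi>. Pi_extension L \<phi> \<chi> \<longrightarrow> extends \<psi> C \<chi> (PiL L \<phi>))"
proof -
  have \<psi>_ext: "Pi_extension L \<phi> \<psi>"
    using Pi_extension_of_Pi_complete[OF assms(3,5,4)] .
  have "extends \<psi> C \<chi> (PiL L \<phi>)" if "Pi_extension L \<phi> \<chi>" for \<chi>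
    using PiL_subset_Pi_complete[OF assms(5,4)] Pi_extension_unique[OF \<psi>_ext that]
    unfolding extends_def by blast
  then show ?thesis using \<psi>_ext unfolding Pi_extendible_def by blast
qed

end
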